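(* The map $R:[0,1]\to[0,1]$ is continuous at every point of $[0,1]\setminus(\mathscr D\setminus\{1\})$, and at every point of $\mathscr D\setminus\{1\}$ it is left-continuous but not continuous. Hence $R$ is a Borel function of Baire class $1$, i.e. a pointwise limit of continuous functions.
   Context: Define $\rho$ on binary words: for $b=b_1b_2\dots$, $\rho(b)$ is obtained by deleting every digit $b_n=0$ and replacing every $b_n=1$ by $0$ if $n$ is odd and by $1$ if $n$ is even. Let $\mathscr C$ be the set of infinite binary sequences with infinitely many $1$'s; for $x\in(0,1]$ let $\beta(x)\in\mathscr C$ be the unique binary expansion of $x$ with infinitely many $1$'s, i.e. $x=\sum_n\beta(x)_n2^{-n}$. Define $R:[0,1]\to[0,1]$ by $R(0)=2/3$ and, for $x\in(0,1]$, $R(x)=\sum_{n\ge1}c_n2^{-n}$ where $c=\rho(\beta(x))$ (an infinite binary sequence). $\mathscr D$ denotes the set of dyadic rationals in $[0,1]$. *)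

theory Defs
  imports "HOL-Analysis.Analysis" "HOL-Library.Infinite_Set"
begin

text \<open>Binary sequences are functions nat => bool, indexed from 0: entry b k is the
  digit b_(k+1) of the paper (True = 1, False = 0).\<close>

definition beta :: "real \<Rightarrow> (nat \<Rightarrow> bool)" where
  "beta x = (THE b. infinite {n. b n} \<and> x = (\<Sum>n. of_bool (b n) / 2 ^ Suc n))"

text \<open>The map rho on sequences with infinitely many 1's: delete the 0-digits and replace
  the 1 at (1-based) position n by 0 if n is odd and by 1 if n is even. The k-th 1 of b
  sits at 0-based index enumerate {n. b n} k, i.e. 1-based position that index + 1,
  which is even iff the 0-based index is odd.\<close>
definition rho :: "(nat \<Rightarrow> bool) \<Rightarrow> (nat \<Rightarrow> bool)" where
  "rho b = (\<lambda>k. odd (enumerate {n. b n} k))"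

definition R :: "real \<Rightarrow> real" where
  "R x = (if x = 0 then 2/3 else (\<Sum>k. of_bool (rho (beta x) k) / 2 ^ Suc k))"

definition dyadics :: "real set" where
  "dyadics = {x. (\<exists>m n::nat. x = real m / 2 ^ n) \<and> 0 \<le> x \<and> x \<le> 1}"

end

theory Submission
  imports Defs
begin

text \<open>R reads the binary expansion with infinitely many 1's, whose first n digits are determined
  by the ceiling of 2^n x. These ceilings are locally constant from the left everywhere and from
  both sides off the dyadics, and the first K digits of rho b depend only on an initial segment
  of b; hence R is left-continuous everywhere and continuous off the dyadics. At a dyadic
  d = m / 2^(N+1) with m odd the expansion of d has a 0 at position N followed by 1's, while points
  just to the right of d have a 1 there: this flips the parity of the positions of all later 1's,
  so rho changes at a fixed digit and R jumps by a fixed amount (at 0 one compares R 0 = 2/3 with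
  R (4^-j) \<le> 3/8 directly). The piecewise linear interpolants of R at the nodes j / 2^n are
  continuous and converge to R at dyadic points and at points of continuity, i.e. everywhere.\<close>

section \<open>Binary values and the map rho\<close>

definition bin_val :: "(nat \<Rightarrow> bool) \<Rightarrow> real" where
  "bin_val c = (\<Sum>k. of_bool (c k) / 2 ^ Suc k)"

lemma summable_bin_val: "summable (\<lambda>k. of_bool (c k) / (2::real) ^ Suc k)"
proof (rule summable_comparison_test'[of "\<lambda>k. (1/2) * (1/2) ^ k"])
  show "summable (\<lambda>k. (1/2::real) * (1/2) ^ k)"
    by (intro summable_mult summable_geometric) simp
qed (simp add: power_divide)

lemma bin_val_split:
  "bin_val c = (\<Sum>k<n. of_bool (c k) / 2 ^ Suc k) + (\<Sum>j. of_bool (c (j + n)) / 2 ^ Suc (j + n))"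
  unfolding bin_val_def using suminf_split_initial_segment[OF summable_bin_val, of c n] by simp

lemma bin_val_tail_bounds:
  shows "0 \<le> (\<Sum>j. of_bool (c (j + n)) / (2::real) ^ Suc (j + n))"
    and "(\<Sum>j. of_bool (c (j + n)) / (2::real) ^ Suc (j + n)) \<le> 1 / 2 ^ n"
proof -
  have s: "summable (\<lambda>j. of_bool (c (j + n)) / (2::real) ^ Suc (j + n))"
    using summable_iff_shift[of "\<lambda>k. of_bool (c k) / (2::real) ^ Suc k" n] summable_bin_val[of c]
    by simp
  show "0 \<le> (\<Sum>j. of_bool (c (j + n)) / (2::real) ^ Suc (j + n))"
    by (intro suminf_nonneg s) simp
  have geo: "(\<lambda>j. 1 / 2 ^ Suc n * (1/2) ^ j) sums (1 / 2 ^ Suc n * (1 / (1 - 1/2::real)))"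
    by (intro sums_mult geometric_sums) simp
  have "(\<Sum>j. of_bool (c (j + n)) / (2::real) ^ Suc (j + n)) \<le> (\<Sum>j. 1 / 2 ^ Suc n * (1/2) ^ j)"
    by (rule suminf_le[OF _ s sums_summable[OF geo]]) (simp add: power_add power_divide mult_ac)
  also have "\<dots> = 1 / 2 ^ n"
    using sums_unique[OF geo] by simp
  finally show "(\<Sum>j. of_bool (c (j + n)) / (2::real) ^ Suc (j + n)) \<le> 1 / 2 ^ n" .
qed

lemma bin_val_diff_le:
  assumes "\<And>k. k < n \<Longrightarrow> c k = c' k"
  shows "\<bar>bin_val c - bin_val c'\<bar> \<le> 1 / 2 ^ n"
  using bin_val_split[of c n] bin_val_split[of c' n] assms
    bin_val_tail_bounds[of c n] bin_val_tail_bounds[of c' n]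
  by (simp add: abs_le_iff)

lemma bin_val_diff_ge:
  assumes "\<And>k. k < n \<Longrightarrow> c k = c' k" "c n" "\<not> c' n" "c (n + 2) \<or> \<not> c' (n + 2)"
  shows "1 / 2 ^ (n + 3) \<le> bin_val c - bin_val c'"
proof -
  let ?t = "\<lambda>c k. of_bool (c k) / (2::real) ^ Suc k"
  have split: "(\<Sum>k<n + 3. ?t c k) - (\<Sum>k<n + 3. ?t c' k)
      = (\<Sum>k<n. ?t c k - ?t c' k) + (?t c n - ?t c' n) + (?t c (n + 1) - ?t c' (n + 1))
        + (?t c (n + 2) - ?t c' (n + 2))"
    by (simp add: numeral_3_eq_3 sum_subtractf)
  have "(\<Sum>k<n. ?t c k - ?t c' k) = 0"
    using assms(1) by simp
  moreover have "?t c n - ?t c' n = 1 / 2 ^ Suc n"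
    using assms(2,3) by simp
  moreover have "?t c (n + 1) - ?t c' (n + 1) \<ge> - (1 / 2 ^ (n + 2))"
    by simp
  moreover have "?t c (n + 2) - ?t c' (n + 2) \<ge> 0"
    using assms(4) by auto
  ultimately have "1 / 2 ^ Suc n - 1 / 2 ^ (n + 2) \<le> (\<Sum>k<n + 3. ?t c k) - (\<Sum>k<n + 3. ?t c' k)"
    unfolding split by linarith
  moreover have "(1::real) / 2 ^ Suc n - 1 / 2 ^ (n + 2) - 1 / 2 ^ (n + 3) = 1 / 2 ^ (n + 3)"
    by (simp add: field_simps power_add)
  ultimately show ?thesis
    using bin_val_split[of c "n + 3"] bin_val_split[of c' "n + 3"]
      bin_val_tail_bounds[of c "n + 3"] bin_val_tail_bounds[of c' "n + 3"] by linarith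
qed

lemma card_less_enumerate:
  fixes S :: "nat set"
  assumes "infinite S"
  shows "card {m \<in> S. m < enumerate S k} = k"
proof -
  have "{m \<in> S. m < enumerate S k} = enumerate S ` {..<k}"
  proof
    show "{m \<in> S. m < enumerate S k} \<subseteq> enumerate S ` {..<k}"
      using enumerate_Ex[OF assms] assms by fastforce
    show "enumerate S ` {..<k} \<subseteq> {m \<in> S. m < enumerate S k}"
      using assms by (auto intro: enumerate_in_set)
  qed
  moreover have "inj_on (enumerate S) {..<k}"
    using inj_enumerate[OF assms] by (rule inj_on_subset) simp
  ultimately show ?thesis
    by (simp add: card_image)
qed

lemma enumerate_eqI:
  fixes S :: "nat set"
  assumes "infinite S" "n \<in> S" "card {m \<in> S. m < n} = k"
  shows "enumerate S k = n"
proof -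
  obtain j where j: "enumerate S j = n"
    using enumerate_Ex[OF assms(1,2)] by blast
  with card_less_enumerate[OF assms(1), of j] assms(3) show ?thesis
    by simp
qed

lemma enumerate_less_iff:
  fixes S :: "nat set"
  assumes "infinite S"
  shows "enumerate S k < n \<longleftrightarrow> k < card {m \<in> S. m < n}"
proof
  assume "enumerate S k < n"
  then have "{m \<in> S. m < enumerate S k} \<subset> {m \<in> S. m < n}"
    using enumerate_in_set[OF assms] by auto
  then have "card {m \<in> S. m < enumerate S k} < card {m \<in> S. m < n}"
    by (intro psubset_card_mono) auto
  then show "k < card {m \<in> S. m < n}"
    using card_less_enumerate[OF assms] by simp
next
  assume "k < card {m \<in> S. m < n}"
  moreover have "card {m \<in> S. m < n} \<le> card {m \<in> S. m < enumerate S k}"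
    if "n \<le> enumerate S k"
    using that by (intro card_mono) auto
  ultimately show "enumerate S k < n"
    using card_less_enumerate[OF assms, of k] by (metis leD not_le)
qed

lemma rho_eq_if_prefix_eq:
  assumes "infinite {n. b n}" "infinite {n. b' n}" "\<And>n. n < M \<Longrightarrow> b n = b' n"
    and "k < card {n. b n \<and> n < M}"
  shows "rho b k = rho b' k"
proof -
  let ?e = "enumerate {n. b n} k"
  have "?e < M"
    using enumerate_less_iff[OF assms(1)] assms(4) by simp
  moreover have "enumerate {n. b' n} k = ?e"
  proof (rule enumerate_eqI[OF assms(2)])
    show "?e \<in> {n. b' n}"
      using enumerate_in_set[OF assms(1), of k] assms(3) \<open>?e < M\<close> by simp
    have "{m \<in> {n. b' n}. m < ?e} = {m \<in> {n. b n}. m < ?e}"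
      using assms(3) \<open>?e < M\<close> by auto
    then show "card {m \<in> {n. b' n}. m < ?e} = k"
      using card_less_enumerate[OF assms(1)] by simp
  qed
  ultimately show ?thesis
    unfolding rho_def by simp
qed

text \<open>The K-th 1 of b sits at M + 1 and the K-th 1 of b' at M, positions of opposite parity,
  so rho b and rho b' first differ at index K; and rho b (K + 2) = rho b K since the (K+2)-th 1
  of b sits at M + 3.\<close>
lemma rho_flip_gap:
  assumes inf: "infinite {n. b n}" "infinite {n. b' n}"
    and prefix: "\<And>n. n < M \<Longrightarrow> b n = b' n"
    and flip: "\<not> b M" "b' M"
    and ones: "b (M + 1)" "b (M + 2)" "b (M + 3)"
  shows "1 / 2 ^ (card {n. b n \<and> n < M} + 3) \<le> \<bar>bin_val (rho b) - bin_val (rho b')\<bar>"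
proof -
  define K where "K = card {n. b n \<and> n < M}"
  have below_M1: "{m \<in> {n. b n}. m < M + 1} = {n. b n \<and> n < M}"
    using flip(1) by (auto simp: less_Suc_eq)
  have eb: "enumerate {n. b n} K = M + 1"
    by (rule enumerate_eqI[OF inf(1)]) (use ones below_M1 in \<open>simp_all add: K_def\<close>)
  have "{m \<in> {n. b n}. m < M + 3} = insert (M + 1) (insert (M + 2) {n. b n \<and> n < M})"
    using flip(1) ones by (auto simp: numeral_3_eq_3 less_Suc_eq)
  then have eb2: "enumerate {n. b n} (K + 2) = M + 3"
    by (intro enumerate_eqI[OF inf(1)]) (use ones in \<open>simp_all add: K_def\<close>)
  have "{m \<in> {n. b' n}. m < M} = {n. b n \<and> n < M}"
    using prefix by auto
  then have eb': "enumerate {n. b' n} K = M"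
    by (intro enumerate_eqI[OF inf(2)]) (use flip in \<open>simp_all add: K_def\<close>)
  have agree: "rho b k = rho b' k" if "k < K" for k
    using rho_eq_if_prefix_eq[OF inf prefix] that by (simp add: K_def)
  have digits: "rho b K = even M" "rho b (K + 2) = even M" "rho b' K = odd M"
    unfolding rho_def eb eb2 eb' by simp_all
  show ?thesis
  proof (cases "even M")
    case True
    then have "1 / 2 ^ (K + 3) \<le> bin_val (rho b) - bin_val (rho b')"
      by (intro bin_val_diff_ge) (use agree digits in auto)
    then show ?thesis
      unfolding K_def by linarith
  next
    case False
    then have "1 / 2 ^ (K + 3) \<le> bin_val (rho b') - bin_val (rho b)"
      by (intro bin_val_diff_ge) (use agree digits in auto)
    then show ?thesis
      unfolding K_def by linarith
  qed
qed

section \<open>The binary expansion with infinitely many 1's\<close>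

text \<open>The ceiling (rather than the floor) selects, at dyadic points, the expansion ending in 1's.\<close>
definition bin_digit :: "real \<Rightarrow> nat \<Rightarrow> bool" where
  "bin_digit x n = even \<lceil>2 ^ Suc n * x\<rceil>"

fun bin_prefix :: "(nat \<Rightarrow> bool) \<Rightarrow> nat \<Rightarrow> int" where
  "bin_prefix b 0 = 0"
| "bin_prefix b (Suc n) = 2 * bin_prefix b n + of_bool (b n)"

lemma bin_prefix_eq_sum: "real_of_int (bin_prefix b n) = 2 ^ n * (\<Sum>k<n. of_bool (b k) / 2 ^ Suc k)"
  by (induction n) (auto simp: field_simps)

lemma ceiling_bin_val:
  assumes "infinite {n. b n}"
  shows "\<lceil>2 ^ n * bin_val b\<rceil> = bin_prefix b n + 1"
proof -
  let ?T = "\<Sum>j. of_bool (b (j + n)) / (2::real) ^ Suc (j + n)"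
  obtain m where m: "n \<le> m" "b m"
    using assms unfolding infinite_nat_iff_unbounded_le by auto
  have "0 < ?T"
  proof (rule suminf_pos2[of _ "m - n"])
    show "summable (\<lambda>j. of_bool (b (j + n)) / (2::real) ^ Suc (j + n))"
      using summable_iff_shift[of "\<lambda>k. of_bool (b k) / (2::real) ^ Suc k" n] summable_bin_val[of b]
      by simp
  qed (use m in auto)
  moreover have "?T \<le> 1 / 2 ^ n"
    by (rule bin_val_tail_bounds(2))
  moreover have "2 ^ n * bin_val b = bin_prefix b n + 2 ^ n * ?T"
    using bin_val_split[of b n] bin_prefix_eq_sum[of b n] by (simp add: distrib_left)
  ultimately have "bin_prefix b n < 2 ^ n * bin_val b" "2 ^ n * bin_val b \<le> bin_prefix b n + 1"
    by (simp_all add: field_simps)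
  then show ?thesis
    by (intro ceiling_unique) auto
qed

lemma bin_digit_bin_val:
  assumes "infinite {n. b n}"
  shows "bin_digit (bin_val b) = b"
proof
  fix n
  show "bin_digit (bin_val b) n = b n"
    using ceiling_bin_val[OF assms, of "Suc n"] by (simp add: bin_digit_def)
qed

lemma bin_prefix_bin_digit:
  assumes "0 < x" "x \<le> 1"
  shows "bin_prefix (bin_digit x) n = \<lceil>2 ^ n * x\<rceil> - 1"
proof (induction n)
  case 0
  show ?case
    using assms by (simp add: ceiling_unique)
next
  case (Suc n)
  define c where "c = \<lceil>2 ^ n * x\<rceil>"
  have "c - 1 < 2 ^ n * x" "2 ^ n * x \<le> c"
    unfolding c_def by linarith+
  then have "2 * c - 2 < 2 ^ Suc n * x" "2 ^ Suc n * x \<le> 2 * c"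
    by auto
  then have "\<lceil>2 ^ Suc n * x\<rceil> = 2 * c \<or> \<lceil>2 ^ Suc n * x\<rceil> = 2 * c - 1"
    by linarith
  then show ?case
    using Suc by (auto simp: bin_digit_def c_def)
qed

lemma bin_val_bin_digit:
  assumes "0 < x" "x \<le> 1"
  shows "bin_val (bin_digit x) = x" and "infinite {n. bin_digit x n}"
proof -
  let ?P = "\<lambda>n. \<Sum>k<n. of_bool (bin_digit x k) / (2::real) ^ Suc k"
  have P: "?P n = (\<lceil>2 ^ n * x\<rceil> - 1) / 2 ^ n" for n
    using bin_prefix_eq_sum[of "bin_digit x" n] bin_prefix_bin_digit[OF assms, of n]
    by (simp add: divide_simps)
  have lower: "x - 1 / 2 ^ n \<le> ?P n" and upper: "?P n < x" for n
  proof -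
    have "2 ^ n * x \<le> \<lceil>2 ^ n * x\<rceil>" "\<lceil>2 ^ n * x\<rceil> < 2 ^ n * x + 1"
      by linarith+
    moreover have "(0::real) < 2 ^ n"
      by simp
    ultimately show "x - 1 / 2 ^ n \<le> ?P n" "?P n < x"
      unfolding P by (simp_all add: field_simps)
  qed
  have "(\<lambda>n. x - 1 / 2 ^ n) \<longlonglongrightarrow> x - 0"
    by (intro tendsto_diff tendsto_const LIMSEQ_divide_realpow_zero) auto
  then have approx: "(\<lambda>n. x - 1 / 2 ^ n) \<longlonglongrightarrow> x"
    by simp
  have "?P \<longlonglongrightarrow> x"
    by (rule tendsto_sandwich[OF _ _ approx tendsto_const])
      (use lower upper in \<open>auto intro!: always_eventually less_imp_le\<close>)
  then show val: "bin_val (bin_digit x) = x"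
    unfolding bin_val_def sums_def[symmetric] by (rule sums_unique[symmetric])
  show "infinite {n. bin_digit x n}"
  proof
    assume "finite {n. bin_digit x n}"
    then obtain N where "\<And>n. bin_digit x n \<Longrightarrow> n < N"
      using finite_nat_set_iff_bounded by auto
    then have "(\<lambda>j. of_bool (bin_digit x (j + N)) / (2::real) ^ Suc (j + N)) = (\<lambda>_. 0)"
      by fastforce
    then have "bin_val (bin_digit x) = ?P N"
      using bin_val_split[of "bin_digit x" N] by simp
    then show False
      using val upper[of N] by simp
  qed
qed

lemma beta_eq_bin_digit:
  assumes "0 < x" "x \<le> 1"
  shows "beta x = bin_digit x"
  unfolding beta_def
proof (rule the_equality)
  show "infinite {n. bin_digit x n} \<and> x = (\<Sum>n. of_bool (bin_digit x n) / 2 ^ Suc n)"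
    using bin_val_bin_digit[OF assms] unfolding bin_val_def by simp
next
  fix b
  assume "infinite {n. b n} \<and> x = (\<Sum>n. of_bool (b n) / 2 ^ Suc n)"
  then show "b = bin_digit x"
    using bin_digit_bin_val[of b] unfolding bin_val_def by simp
qed

lemma R_eq_bin_val: "0 < x \<Longrightarrow> x \<le> 1 \<Longrightarrow> R x = bin_val (rho (bin_digit x))"
  unfolding R_def bin_val_def using beta_eq_bin_digit by simp

section \<open>Continuity and jumps of R\<close>

lemma eventually_ceiling_eq_from_below:
  fixes f :: "'a \<Rightarrow> real"
  assumes "(f \<longlongrightarrow> l) F" "eventually (\<lambda>x. f x \<le> l) F"
  shows "eventually (\<lambda>x. \<lceil>f x\<rceil> = \<lceil>l\<rceil>) F"
proof -
  have "eventually (\<lambda>x. of_int \<lceil>l\<rceil> - 1 < f x) F"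
    by (rule order_tendstoD(1)[OF assms(1)]) linarith
  with assms(2) show ?thesis
  proof eventually_elim
    case (elim x)
    then show ?case
      by (intro ceiling_unique) (auto intro: order.trans[OF _ le_of_int_ceiling])
  qed
qed

lemma eventually_bin_digit_eq:
  fixes x :: real
  assumes "(\<forall>y\<in>S. y \<le> x) \<or> (\<forall>n::nat. 2 ^ n * x \<notin> \<int>)"
  shows "eventually (\<lambda>y. \<forall>n<M. bin_digit y n = bin_digit x n) (at x within S)"
proof -
  have id: "((\<lambda>y. y) \<longlongrightarrow> x) (at x within S)"
    by (rule tendsto_ident_at)
  have ceiling_eq: "eventually (\<lambda>y. \<lceil>2 ^ l * y\<rceil> = \<lceil>2 ^ l * x\<rceil>) (at x within S)" for l :: nat
    using assms
  proof
    assume "\<forall>y\<in>S. y \<le> x"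
    then have "eventually (\<lambda>y. 2 ^ l * y \<le> 2 ^ l * x) (at x within S)"
      by (auto simp: eventually_at_filter)
    then show ?thesis
      by (intro eventually_ceiling_eq_from_below tendsto_mult_left id)
  next
    assume "\<forall>n::nat. 2 ^ n * x \<notin> \<int>"
    then show ?thesis
      by (intro eventually_ceiling_eq tendsto_mult_left id) auto
  qed
  have "eventually (\<lambda>y. \<forall>n\<in>{..<M}. \<lceil>2 ^ Suc n * y\<rceil> = \<lceil>2 ^ Suc n * x\<rceil>) (at x within S)"
    by (intro eventually_ball_finite ballI ceiling_eq) simp
  then show ?thesis
    by eventually_elim (simp add: bin_digit_def)
qed

lemma R_continuous_within:
  fixes x :: real
  assumes x: "0 < x" "x \<le> 1" and S: "S \<subseteq> {0..1}"
    and side: "(\<forall>y\<in>S. y \<le> x) \<or> (\<forall>n::nat. 2 ^ n * x \<notin> \<int>)"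
  shows "continuous (at x within S) R"
  unfolding continuous_within tendsto_iff
proof (intro allI impI)
  fix e :: real
  assume "e > 0"
  then obtain K where K: "1 / 2 ^ K < e"
    using real_arch_pow_inv[of e "1/2"] by (auto simp: power_divide)
  define M where "M = enumerate {n. bin_digit x n} K"
  have inf_x: "infinite {n. bin_digit x n}"
    using bin_val_bin_digit[OF x] by simp
  have "eventually (\<lambda>y. y \<in> S) (at x within S)"
    by (simp add: eventually_at_filter)
  moreover have "eventually (\<lambda>y. 0 < y) (at x within S)"
    by (rule order_tendstoD(1)[OF tendsto_ident_at x(1)])
  ultimately show "eventually (\<lambda>y. dist (R y) (R x) < e) (at x within S)"
    using eventually_bin_digit_eq[OF side, of M]
  proof eventually_elim
    case (elim y)
    then have y: "0 < y" "y \<le> 1"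
      using S by auto
    have "rho (bin_digit y) k = rho (bin_digit x) k" if "k < K" for k
      using rho_eq_if_prefix_eq[of "bin_digit x" "bin_digit y" M k] elim(3) inf_x
        bin_val_bin_digit(2)[OF y] card_less_enumerate[OF inf_x, of K] that by (simp add: M_def)
    then have "\<bar>R y - R x\<bar> \<le> 1 / 2 ^ K"
      unfolding R_eq_bin_val[OF x] R_eq_bin_val[OF y] by (rule bin_val_diff_le)
    with K show ?case
      by (simp add: dist_real_def)
  qed
qed

lemma not_continuous_within_sequentially:
  fixes f :: "'a::metric_space \<Rightarrow> 'b::metric_space"
  assumes "\<And>n. X n \<in> S" "X \<longlonglongrightarrow> a" "0 < e" "\<And>n. e \<le> dist (f (X n)) (f a)"
  shows "\<not> continuous (at a within S) f"
proof
  assume "continuous (at a within S) f"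
  then have "(\<lambda>n. f (X n)) \<longlonglongrightarrow> f a"
    using assms(1,2) unfolding continuous_within_sequentially by (auto simp: comp_def)
  then have "eventually (\<lambda>n. dist (f (X n)) (f a) < e) sequentially"
    using assms(3) by (rule tendstoD)
  then show False
    using assms(4) by (simp add: not_le[symmetric])
qed

lemma bin_digit_inverse_power2: "bin_digit (1 / 2 ^ k) n \<longleftrightarrow> k \<le> n"
proof (cases "k \<le> n")
  case True
  then obtain i where "n = k + i"
    using le_Suc_ex by blast
  then have "2 ^ Suc n * (1 / 2 ^ k) = (of_int (2 * 2 ^ i) :: real)"
    by (simp add: power_add)
  then show ?thesis
    using True unfolding bin_digit_def by (simp only: ceiling_of_int) simp
next
  case False
  then obtain i where "k = Suc n + i"
    using le_Suc_ex not_less_eq_eq by blast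
  then have "\<lceil>2 ^ Suc n * (1 / 2 ^ k) :: real\<rceil> = 1"
    by (intro ceiling_unique) (auto simp: power_add)
  then show ?thesis
    using False unfolding bin_digit_def by simp
qed

lemma R_inverse_power4_le: "R (1 / 2 ^ (2 * j)) \<le> 3 / 8"
proof -
  define k where "k = 2 * j"
  have "{n. bin_digit (1 / 2 ^ k) n} = {k..}"
    by (auto simp: bin_digit_inverse_power2)
  moreover have "{m \<in> {k..}. m < k + i} = {k..<k + i}" for i
    by auto
  ultimately have enum: "enumerate {n. bin_digit (1 / 2 ^ k) n} i = k + i" for i
    by (simp add: enumerate_eqI infinite_Ici)
  have "(\<lambda>i. of_bool (i = 0) / (2::real) ^ Suc i) = (\<lambda>i. if i = 0 then 1 / 2 else 0)"
    by auto
  then have "(\<lambda>i. of_bool (i = 0) / (2::real) ^ Suc i) sums (1 / 2)"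
    using sums_single[of 0 "\<lambda>_. 1 / 2 :: real"] by simp
  then have "bin_val (\<lambda>i. i = 0) = 1 / 2"
    unfolding bin_val_def by (rule sums_unique[symmetric])
  moreover have "1 / 2 ^ (0 + 3) \<le> bin_val (\<lambda>i. i = 0) - bin_val (rho (bin_digit (1 / 2 ^ k)))"
    by (rule bin_val_diff_ge) (unfold rho_def enum, simp_all add: k_def)
  ultimately show ?thesis
    using R_eq_bin_val[of "1 / 2 ^ k"] by (simp add: k_def)
qed

lemma R_not_continuous_at_0: "\<not> continuous (at 0 within {0..1}) R"
proof (rule not_continuous_within_sequentially)
  show "(\<lambda>j. 1 / 2 ^ (2 * j) :: real) \<longlonglongrightarrow> 0"
    by (simp add: power_mult LIMSEQ_divide_realpow_zero)
  show "1 / 4 \<le> dist (R (1 / 2 ^ (2 * j))) (R 0)" for j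
    using R_inverse_power4_le[of j] by (simp add: R_def dist_real_def)
qed simp_all

lemma ceiling_eq_between_multiples:
  fixes m q :: int and z :: real
  assumes "0 < q" "\<not> q dvd m" "m / q \<le> z" "z \<le> (m + 1) / q"
  shows "\<lceil>z\<rceil> = \<lceil>(m + 1) / q\<rceil>"
proof (rule antisym)
  show "\<lceil>z\<rceil> \<le> \<lceil>(m + 1) / q\<rceil>"
    using assms(4) by (rule ceiling_mono)
  have "m \<le> \<lceil>z\<rceil> * q"
  proof -
    have "real_of_int m \<le> z * q"
      using assms(1,3) by (simp add: field_simps)
    also have "\<dots> \<le> \<lceil>z\<rceil> * q"
      using assms(1) by (simp add: mult_right_mono)
    finally show ?thesis
      by linarith
  qed
  moreover have "m \<noteq> \<lceil>z\<rceil> * q"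
    using assms(2) by auto
  ultimately have "real_of_int (m + 1) \<le> real_of_int (\<lceil>z\<rceil> * q)"
    by linarith
  then have "(m + 1) / q \<le> real_of_int \<lceil>z\<rceil>"
    using assms(1) by (simp add: field_simps)
  then show "\<lceil>(m + 1) / q\<rceil> \<le> \<lceil>z\<rceil>"
    by (simp add: ceiling_le_iff)
qed

lemma bin_digit_odd_dyadic:
  assumes "d = real m / 2 ^ Suc N" "odd m"
  shows "\<not> bin_digit d N" and "bin_digit d (Suc N + i)"
proof -
  show "\<not> bin_digit d N"
    using assms by (simp add: bin_digit_def)
  have "2 ^ Suc (Suc N + i) * d = of_int (2 ^ Suc i * int m)"
    using assms(1) by (simp add: power_add)
  then show "bin_digit d (Suc N + i)"
    unfolding bin_digit_def by (simp only: ceiling_of_int) simp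
qed

lemma bin_digit_right_of_odd_dyadic:
  assumes d: "d = real m / 2 ^ Suc N" "odd m" and y: "d < y" "y \<le> d + 1 / 2 ^ Suc N"
  shows "n < N \<Longrightarrow> bin_digit y n = bin_digit d n" and "bin_digit y N"
proof -
  assume "n < N"
  define q :: int where "q = 2 ^ (N - n)"
  have "(2::int) dvd q"
    using \<open>n < N\<close> by (simp add: q_def)
  then have q: "0 < q" "\<not> q dvd int m"
    using d(2) dvd_trans[of 2 q "int m"] by (auto simp: q_def)
  have split: "(2::real) ^ Suc N = 2 ^ Suc n * q"
    using \<open>n < N\<close> by (simp add: q_def flip: power_add)
  have dn: "2 ^ Suc n * d = int m / q"
    unfolding d(1) split by simp
  have "2 ^ Suc n * (1 / 2 ^ Suc N) = 1 / real_of_int q"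
    unfolding split by simp
  moreover have "2 ^ Suc n * d < 2 ^ Suc n * y"
    using y(1) by (intro mult_strict_left_mono) simp_all
  moreover have "2 ^ Suc n * y \<le> 2 ^ Suc n * (d + 1 / 2 ^ Suc N)"
    using y(2) by (intro mult_left_mono) simp_all
  ultimately have "int m / q < 2 ^ Suc n * y" "2 ^ Suc n * y \<le> (int m + 1) / q"
    by (simp_all only: dn distrib_left add_divide_distrib of_int_add of_int_1 of_int_of_nat_eq)
  then have "\<lceil>2 ^ Suc n * y\<rceil> = \<lceil>(int m + 1) / q\<rceil>"
    by (intro ceiling_eq_between_multiples[OF q]) simp_all
  also have "\<dots> = \<lceil>2 ^ Suc n * d\<rceil>"
    by (rule sym, rule ceiling_eq_between_multiples[OF q])
      (use dn q(1) in \<open>simp_all add: divide_right_mono\<close>)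
  finally have "\<lceil>2 ^ Suc n * y\<rceil> = \<lceil>2 ^ Suc n * d\<rceil>" .
  then show "bin_digit y n = bin_digit d n"
    by (simp add: bin_digit_def)
next
  have "real m < 2 ^ Suc N * y" "2 ^ Suc N * y \<le> real m + 1"
    using y unfolding d(1) by (simp_all add: field_simps)
  then have "\<lceil>2 ^ Suc N * y\<rceil> = int m + 1"
    by (intro ceiling_unique) auto
  then show "bin_digit y N"
    using d(2) by (simp add: bin_digit_def)
qed

lemma R_jump_right_of_odd_dyadic:
  assumes d: "d = real m / 2 ^ Suc N" "odd m"
    and y: "d < y" "y \<le> d + 1 / 2 ^ Suc N" "y \<le> 1"
  shows "1 / 2 ^ (card {n. bin_digit d n \<and> n < N} + 3) \<le> \<bar>R y - R d\<bar>"
proof -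
  have "0 < m"
    using d(2) by (simp add: odd_pos)
  then have d_range: "0 < d" "d \<le> 1"
    using d(1) y(1,3) by (simp, linarith)
  have "1 / 2 ^ (card {n. bin_digit d n \<and> n < N} + 3)
      \<le> \<bar>bin_val (rho (bin_digit d)) - bin_val (rho (bin_digit y))\<bar>"
  proof (rule rho_flip_gap)
    show "infinite {n. bin_digit d n}" "infinite {n. bin_digit y n}"
      using bin_val_bin_digit(2) d_range y by auto
    show "bin_digit d n = bin_digit y n" if "n < N" for n
      using bin_digit_right_of_odd_dyadic(1)[OF d y(1,2) that] by simp
    show "\<not> bin_digit d N" "bin_digit y N"
      using bin_digit_odd_dyadic(1)[OF d] bin_digit_right_of_odd_dyadic(2)[OF d y(1,2)] .
    show "bin_digit d (N + 1)" "bin_digit d (N + 2)" "bin_digit d (N + 3)"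
      using bin_digit_odd_dyadic(2)[OF d, of 0] bin_digit_odd_dyadic(2)[OF d, of 1]
        bin_digit_odd_dyadic(2)[OF d, of 2] by (simp_all add: numeral_3_eq_3)
  qed
  then show ?thesis
    using R_eq_bin_val d_range y by (simp add: abs_minus_commute)
qed

lemma R_not_continuous_at_odd_dyadic:
  assumes d: "d = real m / 2 ^ Suc N" "odd m" "d < 1"
  shows "\<not> continuous (at d within {0..1}) R"
proof (rule not_continuous_within_sequentially)
  define y where "y j = d + 1 / 2 ^ (Suc N + j)" for j
  have "real m = d * 2 ^ Suc N"
    using d(1) by simp
  also have "\<dots> < 2 ^ Suc N"
    using d(3) by simp
  finally have "real m + 1 \<le> 2 ^ Suc N"
    by (metis Suc_leI of_nat_Suc of_nat_le_iff of_nat_less_iff of_nat_numeral of_nat_power add.commute)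
  then have upper: "d + 1 / 2 ^ Suc N \<le> 1"
    unfolding d(1) by (simp add: field_simps)
  have step: "d + 1 / 2 ^ (Suc N + j) \<le> d + 1 / 2 ^ Suc N" for j
    by (simp add: field_simps)
  have y_range: "d < y j" "y j \<le> d + 1 / 2 ^ Suc N" "y j \<le> 1" for j
    unfolding y_def using step[of j] upper by simp_all
  have "0 \<le> d"
    using d(1) by simp
  then show "y j \<in> {0..1}" for j
    using y_range[of j] by simp
  have "(\<lambda>j. 1 / 2 ^ (j + Suc N)) \<longlonglongrightarrow> (0::real)"
    by (intro LIMSEQ_ignore_initial_segment LIMSEQ_divide_realpow_zero) simp
  from tendsto_add[OF tendsto_const[of d] this] show "y \<longlonglongrightarrow> d"
    unfolding y_def by (simp add: add.commute)
  show "1 / 2 ^ (card {n. bin_digit d n \<and> n < N} + 3) \<le> dist (R (y j)) (R d)" for j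
    using R_jump_right_of_odd_dyadic[OF d(1,2) y_range] by (simp add: dist_real_def)
qed simp

lemma odd_numerator_representation:
  assumes "x = real m / 2 ^ n" "0 < x" "x < 1"
  shows "\<exists>m' N. odd m' \<and> x = real m' / 2 ^ Suc N"
  using assms
proof (induction n arbitrary: m)
  case 0
  then show ?case
    by simp
next
  case (Suc n)
  show ?case
  proof (cases "odd m")
    case True
    then show ?thesis
      using Suc.prems(1) by blast
  next
    case False
    then obtain k where "m = 2 * k"
      by blast
    then have "x = real k / 2 ^ n"
      using Suc.prems(1) by simp
    then show ?thesis
      using Suc.IH Suc.prems(2,3) by blast
  qed
qed

lemma one_in_dyadics: "1 \<in> dyadics"
  unfolding dyadics_def mem_Collect_eq
  by (intro conjI exI[of _ "1::nat"] exI[of _ "0::nat"]) simp_all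

lemma not_in_dyadics:
  assumes "x \<in> {0..1}" "x \<notin> dyadics"
  shows "0 < x" "x < 1" "2 ^ n * x \<notin> \<int>"
proof -
  have "x \<noteq> 0"
    using assms unfolding dyadics_def by (auto intro!: exI[of _ 0])
  moreover have "x \<noteq> 1"
    using assms one_in_dyadics by auto
  ultimately show x: "0 < x" "x < 1"
    using assms(1) by auto
  show "2 ^ n * x \<notin> \<int>"
  proof
    assume "2 ^ n * x \<in> \<int>"
    then obtain i where i: "2 ^ n * x = real_of_int i"
      by (auto elim: Ints_cases)
    moreover have "0 < 2 ^ n * x"
      using x by simp
    ultimately have "0 \<le> i"
      by simp
    then have "x = real (nat i) / 2 ^ n"
      using i by (simp add: field_simps)
    with assms show False
      unfolding dyadics_def by auto
  qed
qed

lemma R_continuous_off_dyadics: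
  assumes "x \<in> {0..1} - (dyadics - {1})"
  shows "continuous (at x within {0..1}) R"
proof (cases "x = 1")
  case True
  then show ?thesis
    by (intro R_continuous_within) auto
next
  case False
  then have "x \<in> {0..1}" "x \<notin> dyadics"
    using assms by auto
  note x = not_in_dyadics[OF this]
  show ?thesis
    by (rule R_continuous_within) (use x in auto)
qed

lemma R_left_continuous:
  assumes "x \<in> {0..1}"
  shows "continuous (at x within {0..x}) R"
proof (cases "x = 0")
  case True
  then have "at x within {0..x} = bot"
    by (simp add: at_within_eq_bot_iff)
  then show ?thesis
    by (simp add: continuous_bot)
next
  case False
  then show ?thesis
    using assms by (intro R_continuous_within) auto
qed

lemma R_not_continuous_at_dyadic:
  assumes "x \<in> dyadics - {1}"
  shows "\<not> continuous (at x within {0..1}) R"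
proof -
  obtain m n where x: "x = real m / 2 ^ n" "0 \<le> x" "x < 1"
    using assms unfolding dyadics_def by force
  show ?thesis
  proof (cases "x = 0")
    case True
    then show ?thesis
      using R_not_continuous_at_0 by simp
  next
    case False
    then obtain m' N where "x = real m' / 2 ^ Suc N" "odd m'"
      using odd_numerator_representation[OF x(1)] x(2,3) by auto
    then show ?thesis
      using R_not_continuous_at_odd_dyadic x(3) by blast
  qed
qed

section \<open>Piecewise linear interpolation at dyadic nodes\<close>

definition dyadic_interp :: "(real \<Rightarrow> real) \<Rightarrow> nat \<Rightarrow> real \<Rightarrow> real" where
  "dyadic_interp f n x = (\<Sum>j\<le>2 ^ n. f (real j / 2 ^ n) * max 0 (1 - \<bar>2 ^ n * x - real j\<bar>))"

lemma continuous_on_dyadic_interp: "continuous_on S (dyadic_interp f n)"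
  unfolding dyadic_interp_def by (intro continuous_intros)

lemma dyadic_interp_node:
  assumes "j \<le> 2 ^ n"
  shows "dyadic_interp f n (real j / 2 ^ n) = f (real j / 2 ^ n)"
proof -
  let ?g = "\<lambda>i. f (real i / 2 ^ n) * max 0 (1 - \<bar>2 ^ n * (real j / 2 ^ n) - real i\<bar>)"
  have "dyadic_interp f n (real j / 2 ^ n) = (\<Sum>i\<in>{j}. ?g i)"
    unfolding dyadic_interp_def
  proof (rule sum.mono_neutral_right)
    show "\<forall>i\<in>{..2 ^ n} - {j}. ?g i = 0"
    proof
      fix i
      assume "i \<in> {..2 ^ n} - {j}"
      then have "Suc i \<le> j \<or> Suc j \<le> i"
        by auto
      then have "1 \<le> \<bar>real j - real i\<bar>"
        by (auto dest!: of_nat_mono[where 'a=real])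
      then show "?g i = 0"
        by simp
    qed
  qed (use assms in auto)
  then show ?thesis
    by simp
qed

lemma dyadic_interp_between_nodes:
  fixes x :: real and n :: nat
  assumes "0 \<le> x" "x < 1"
  defines "a \<equiv> nat \<lfloor>2 ^ n * x\<rfloor>"
  defines "t \<equiv> 2 ^ n * x - real a"
  shows "dyadic_interp f n x = (1 - t) * f (real a / 2 ^ n) + t * f (real (Suc a) / 2 ^ n)"
    and "0 \<le> t" "t < 1" "Suc a \<le> 2 ^ n"
proof -
  have a: "real a = of_int \<lfloor>2 ^ n * x\<rfloor>"
    using assms(1) unfolding a_def by simp
  show t: "0 \<le> t" "t < 1"
    unfolding t_def a by linarith+
  have "2 ^ n * x < 2 ^ n"
    using assms(2) by simp
  then have "real a < 2 ^ n"
    using t unfolding t_def by linarith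
  then show "Suc a \<le> 2 ^ n"
    by (metis Suc_leI of_nat_less_numeral_power_cancel_iff)
  let ?g = "\<lambda>j. f (real j / 2 ^ n) * max 0 (1 - \<bar>2 ^ n * x - real j\<bar>)"
  have "dyadic_interp f n x = (\<Sum>j\<in>{a, Suc a}. ?g j)"
    unfolding dyadic_interp_def
  proof (rule sum.mono_neutral_right)
    show "\<forall>j\<in>{..2 ^ n} - {a, Suc a}. ?g j = 0"
    proof
      fix j
      assume "j \<in> {..2 ^ n} - {a, Suc a}"
      then have "real j + 1 \<le> real a \<or> real a + 2 \<le> real j"
        by auto
      then have "1 \<le> \<bar>2 ^ n * x - real j\<bar>"
        using t unfolding t_def by linarith
      then show "?g j = 0"
        by simp
    qed
  qed (use \<open>Suc a \<le> 2 ^ n\<close> in auto)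
  also have "\<dots> = (1 - t) * f (real a / 2 ^ n) + t * f (real (Suc a) / 2 ^ n)"
  proof -
    have weights: "max 0 (1 - \<bar>2 ^ n * x - real a\<bar>) = 1 - t"
        "max 0 (1 - \<bar>2 ^ n * x - real (Suc a)\<bar>) = t"
      using t unfolding t_def by auto
    have "(\<Sum>j\<in>{a, Suc a}. ?g j) = ?g a + ?g (Suc a)"
      by simp
    then show ?thesis
      unfolding weights by (simp only: mult.commute)
  qed
  finally show "dyadic_interp f n x = (1 - t) * f (real a / 2 ^ n) + t * f (real (Suc a) / 2 ^ n)" .
qed

lemma dyadic_interp_tendsto_at_dyadic:
  assumes "x \<in> dyadics"
  shows "(\<lambda>n. dyadic_interp f n x) \<longlonglongrightarrow> f x"
proof (rule tendsto_eventually)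
  obtain m N where x: "x = real m / 2 ^ N" "x \<le> 1"
    using assms unfolding dyadics_def by auto
  have "dyadic_interp f n x = f x" if "N \<le> n" for n
  proof -
    have "(2::real) ^ n = 2 ^ N * 2 ^ (n - N)"
      using that by (simp flip: power_add)
    then have "x = real (m * 2 ^ (n - N)) / 2 ^ n"
      unfolding x(1) by simp
    moreover have "real (m * 2 ^ (n - N)) \<le> 2 ^ n"
      using x(2) \<open>x = real (m * 2 ^ (n - N)) / 2 ^ n\<close> by (simp add: field_simps)
    then have "m * 2 ^ (n - N) \<le> 2 ^ n"
      by (metis of_nat_le_iff of_nat_numeral of_nat_power)
    ultimately show ?thesis
      using dyadic_interp_node by metis
  qed
  then show "eventually (\<lambda>n. dyadic_interp f n x = f x) sequentially"
    by (auto simp: eventually_sequentially)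
qed

lemma dyadic_interp_error:
  assumes "0 \<le> x" "x < 1"
  obtains l u where "l \<in> {0..1}" "u \<in> {0..1}" "dist l x \<le> 1 / 2 ^ n" "dist u x \<le> 1 / 2 ^ n"
    and "dist (dyadic_interp f n x) (f x) \<le> max (dist (f l) (f x)) (dist (f u) (f x))"
proof -
  define a where "a = nat \<lfloor>2 ^ n * x\<rfloor>"
  define t where "t = 2 ^ n * x - real a"
  define l where "l = real a / 2 ^ n"
  define u where "u = real (Suc a) / 2 ^ n"
  have interp: "dyadic_interp f n x = (1 - t) * f l + t * f u"
    and t: "0 \<le> t" "t < 1" and a: "Suc a \<le> 2 ^ n"
    using dyadic_interp_between_nodes(1)[OF assms, where f = f and n = n]
      dyadic_interp_between_nodes(2-4)[OF assms, where n = n]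
    unfolding a_def t_def l_def u_def by simp_all
  have l: "l = x - t / 2 ^ n" and u: "u = x + (1 - t) / 2 ^ n"
    by (simp_all add: l_def u_def t_def field_simps)
  have "t / 2 ^ n \<le> 1 / 2 ^ n" "(1 - t) / 2 ^ n \<le> 1 / 2 ^ n"
    using t by (simp_all add: divide_right_mono)
  then have dist: "dist l x \<le> 1 / 2 ^ n" "dist u x \<le> 1 / 2 ^ n"
    unfolding l u dist_real_def using t by simp_all
  have "real (Suc a) \<le> 2 ^ n"
    using a by (metis of_nat_le_iff of_nat_numeral of_nat_power)
  then have "0 \<le> l" "u \<le> 1"
    unfolding l_def u_def by simp_all
  moreover have "l \<le> x" "x \<le> u"
    unfolding l u using t by simp_all
  ultimately have range: "l \<in> {0..1}" "u \<in> {0..1}"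
    using assms by auto
  have "dist (dyadic_interp f n x) (f x)
      = \<bar>(1 - t) * (f l - f x) + t * (f u - f x)\<bar>"
    unfolding interp dist_real_def by (simp add: algebra_simps)
  also have "\<dots> \<le> (1 - t) * dist (f l) (f x) + t * dist (f u) (f x)"
    using t abs_triangle_ineq[of "(1 - t) * (f l - f x)" "t * (f u - f x)"]
    by (simp add: abs_mult dist_real_def)
  also have "\<dots> \<le> max (dist (f l) (f x)) (dist (f u) (f x))"
    using t by (intro convex_bound_le) auto
  finally show ?thesis
    using that range dist by blast
qed

lemma dyadic_interp_tendsto_at_continuity:
  assumes x: "0 \<le> x" "x < 1" and cont: "continuous (at x within {0..1}) f"
  shows "(\<lambda>n. dyadic_interp f n x) \<longlonglongrightarrow> f x"
  unfolding tendsto_iff eventually_sequentially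
proof (intro allI impI)
  fix e :: real
  assume "0 < e"
  then obtain d where d: "0 < d" "\<And>y. y \<in> {0..1} \<Longrightarrow> dist y x < d \<Longrightarrow> dist (f y) (f x) < e"
    using cont unfolding continuous_within_eps_delta by blast
  obtain N where N: "1 / 2 ^ N < d"
    using real_arch_pow_inv[OF d(1), of "1/2"] by (auto simp: power_divide)
  show "\<exists>N. \<forall>n\<ge>N. dist (dyadic_interp f n x) (f x) < e"
  proof (intro exI allI impI)
    fix n
    assume "N \<le> n"
    then have "1 / 2 ^ n < d"
      using N order.strict_trans1[of "1 / 2 ^ n" "1 / 2 ^ N" d] by (simp add: field_simps)
    obtain l u where "l \<in> {0..1}" "u \<in> {0..1}" "dist l x \<le> 1 / 2 ^ n" "dist u x \<le> 1 / 2 ^ n"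
      and error: "dist (dyadic_interp f n x) (f x) \<le> max (dist (f l) (f x)) (dist (f u) (f x))"
      using dyadic_interp_error[OF x] .
    with \<open>1 / 2 ^ n < d\<close> have "dist (f l) (f x) < e" "dist (f u) (f x) < e"
      by (auto intro!: d(2))
    with error show "dist (dyadic_interp f n x) (f x) < e"
      by simp
  qed
qed

theorem proposition3p1:
  shows "(\<forall>x \<in> {0..1} - (dyadics - {1}). continuous (at x within {0..1}) R)
    \<and> (\<forall>x \<in> dyadics - {1}. continuous (at x within {0..x}) R
                             \<and> \<not> continuous (at x within {0..1}) R)
    \<and> R \<in> borel_measurable (restrict_space borel {0..1})
    \<and> (\<exists>f :: nat \<Rightarrow> real \<Rightarrow> real. (\<forall>n. continuous_on {0..1} (f n))
          \<and> (\<forall>x \<in> {0..1}. (\<lambda>n. f n x) \<longlonglongrightarrow> R x))"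
proof -
  have approx: "(\<lambda>n. dyadic_interp R n x) \<longlonglongrightarrow> R x" if x: "x \<in> {0..1}" for x
  proof (cases "x \<in> dyadics")
    case True
    then show ?thesis
      by (rule dyadic_interp_tendsto_at_dyadic)
  next
    case False
    with x show ?thesis
      using not_in_dyadics[OF x False] R_continuous_off_dyadics
      by (intro dyadic_interp_tendsto_at_continuity) auto
  qed
  have "R \<in> borel_measurable (restrict_space borel {0..1})"
    by (rule borel_measurable_LIMSEQ_metric[of "dyadic_interp R"])
      (auto intro: borel_measurable_continuous_on_restrict continuous_on_dyadic_interp approx)
  moreover have "dyadics \<subseteq> {0..1}"
    unfolding dyadics_def by auto
  ultimately show ?thesis
    using R_continuous_off_dyadics R_left_continuous R_not_continuous_at_dyadic
      continuous_on_dyadic_interp approx by blast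
qed

end
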